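(* Let $v\ge2$, $\epsilon>0$ and $k\in\{1,\dots,v-1\}$. Then $k\in K_{opt}(v,\epsilon)$ if and only if $$E(k,k+1;v)\le e^\epsilon\le E(k-1,k;v).$$ Moreover, if $e^\epsilon=E(k,k+1;v)$ for some $k$, then $K_{opt}(v,\epsilon)=\{k,k+1\}$; otherwise $K_{opt}(v,\epsilon)$ is a singleton.
   Context: $K_{opt}(v,\epsilon)$ is the set of integers $k\in\{1,\dots,v-1\}$ minimizing $\frac{(ke^\epsilon+v-k)^2}{k(v-k)}$. For integers $0\le k_1<k_2\le v$ with $(k_1,k_2)\ne(0,v)$, $E(k_1,k_2;v)=\sqrt{\frac{(v-k_1)(v-k_2)}{k_1k_2}}$ when $k_1\ge1$, and $E(0,k_2;v):=\infty$. *)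

theory Defs
  imports Complex_Main "HOL-Library.Extended_Real"
begin

definition kopt_obj :: "nat \<Rightarrow> real \<Rightarrow> nat \<Rightarrow> real" where
  "kopt_obj v \<epsilon> k = (real k * exp \<epsilon> + real v - real k)^2 / (real k * (real v - real k))"

definition K_opt :: "nat \<Rightarrow> real \<Rightarrow> nat set" where
  "K_opt v \<epsilon> = {k \<in> {1..v-1}. \<forall>j \<in> {1..v-1}. kopt_obj v \<epsilon> k \<le> kopt_obj v \<epsilon> j}"

definition E :: "nat \<Rightarrow> nat \<Rightarrow> nat \<Rightarrow> ereal" where
  "E k1 k2 v = (if k1 = 0 then \<infinity>
     else ereal (sqrt ((real v - real k1) * (real v - real k2) / (real k1 * real k2))))"

end

theory Submission
  imports Defs
begin

text \<open>Write \<open>a = exp \<epsilon>\<close> and \<open>f = kopt_obj v \<epsilon>\<close>. Clearing denominators,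
\<open>f (k + 1) - f k = v \<cdot> \<delta> k / (k (k + 1) (v - k) (v - k - 1))\<close> with
\<open>\<delta> k = kopt_delta v \<epsilon> k = a\<^sup>2 k (k + 1) - (v - k) (v - k - 1)\<close>, and \<open>\<delta>\<close> is strictly increasing on
\<open>0..v\<close> with \<open>\<delta> 0 \<le> 0 < \<delta> (v - 1)\<close>. Hence \<open>f\<close> first decreases and then increases, and
its minimisers are exactly the \<open>k\<close> with \<open>\<delta> (k - 1) \<le> 0 \<le> \<delta> k\<close>. Since
\<open>E(k, k + 1; v)\<^sup>2 = a\<^sup>2 - \<delta> k / (k (k + 1))\<close>, the condition \<open>0 \<le> \<delta> k\<close> reads
\<open>E(k, k + 1; v) \<le> a\<close>. By strict monotonicity \<open>\<delta>\<close> vanishes at most once, and a zero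
\<open>\<delta> k = 0\<close> is exactly a tie between \<open>k\<close> and \<open>k + 1\<close>.\<close>

definition kopt_delta :: "nat \<Rightarrow> real \<Rightarrow> nat \<Rightarrow> real" where
  "kopt_delta v \<epsilon> k = (exp \<epsilon>)\<^sup>2 * real k * (real k + 1) - (real v - real k) * (real v - real k - 1)"

lemma kopt_obj_succ_diff:
  assumes "1 \<le> k" "k + 1 < v"
  shows "kopt_obj v \<epsilon> (k + 1) - kopt_obj v \<epsilon> k
     = real v * kopt_delta v \<epsilon> k / (real k * (real k + 1) * (real v - real k) * (real v - real k - 1))"
proof -
  have "real k \<noteq> 0" "real k + 1 \<noteq> 0" "real v - real k \<noteq> 0" "real v - (real k + 1) \<noteq> 0"
    using assms by auto
  then show ?thesis
    unfolding kopt_obj_def kopt_delta_def by (simp add: divide_simps) (simp add: algebra_simps power2_eq_square)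
qed

lemma kopt_obj_le_succ_iff:
  assumes "1 \<le> k" "k + 1 < v"
  shows "kopt_obj v \<epsilon> k \<le> kopt_obj v \<epsilon> (k + 1) \<longleftrightarrow> 0 \<le> kopt_delta v \<epsilon> k"
    and "kopt_obj v \<epsilon> (k + 1) \<le> kopt_obj v \<epsilon> k \<longleftrightarrow> kopt_delta v \<epsilon> k \<le> 0"
proof -
  define c where "c = real v / (real k * (real k + 1) * (real v - real k) * (real v - real k - 1))"
  have "0 < c" unfolding c_def using assms by auto
  moreover have "kopt_obj v \<epsilon> (k + 1) = kopt_obj v \<epsilon> k + c * kopt_delta v \<epsilon> k"
    using kopt_obj_succ_diff[OF assms, of \<epsilon>] unfolding c_def by (simp; linarith)
  ultimately show "kopt_obj v \<epsilon> k \<le> kopt_obj v \<epsilon> (k + 1) \<longleftrightarrow> 0 \<le> kopt_delta v \<epsilon> k"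
    and "kopt_obj v \<epsilon> (k + 1) \<le> kopt_obj v \<epsilon> k \<longleftrightarrow> kopt_delta v \<epsilon> k \<le> 0"
    by (simp_all add: zero_le_mult_iff mult_le_0_iff)
qed

lemma strict_mono_on_kopt_delta: "strict_mono_on {..v} (kopt_delta v \<epsilon>)"
proof (rule strict_mono_onI)
  fix i j assume "i \<in> {..v}" "j \<in> {..v}" "i < j"
  then have "0 < real j - real i" "0 \<le> 2 * real v - real i - real j - 1"
    and "0 < (exp \<epsilon>)\<^sup>2 * (real i + real j + 1)" by auto
  then have "0 < (real j - real i) * ((exp \<epsilon>)\<^sup>2 * (real i + real j + 1) + (2 * real v - real i - real j - 1))"
    by (metis add_pos_nonneg mult_pos_pos)
  also have "\<dots> = kopt_delta v \<epsilon> j - kopt_delta v \<epsilon> i"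
    unfolding kopt_delta_def by (simp add: algebra_simps power2_eq_square)
  finally show "kopt_delta v \<epsilon> i < kopt_delta v \<epsilon> j" by simp
qed

lemma kopt_delta_le_iff:
  assumes "i \<le> v" "j \<le> v"
  shows "kopt_delta v \<epsilon> i \<le> kopt_delta v \<epsilon> j \<longleftrightarrow> i \<le> j"
  using strict_mono_on_less_eq[OF strict_mono_on_kopt_delta] assms by simp

lemma kopt_delta_0_nonpos: "kopt_delta v \<epsilon> 0 \<le> 0"
  unfolding kopt_delta_def by (cases v) auto

lemma kopt_delta_last_pos:
  assumes "2 \<le> v"
  shows "0 < kopt_delta v \<epsilon> (v - 1)"
  using assms unfolding kopt_delta_def by (simp add: of_nat_diff)

lemma K_opt_iff:
  assumes "1 \<le> k" "k < v"
  shows "k \<in> K_opt v \<epsilon> \<longleftrightarrow> kopt_delta v \<epsilon> (k - 1) \<le> 0 \<and> 0 \<le> kopt_delta v \<epsilon> k"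
proof
  assume "k \<in> K_opt v \<epsilon>"
  then have min: "kopt_obj v \<epsilon> k \<le> kopt_obj v \<epsilon> j" if "1 \<le> j" "j < v" for j
    using that unfolding K_opt_def by auto
  have "kopt_delta v \<epsilon> (k - 1) \<le> 0"
  proof (cases "k = 1")
    case True
    then show ?thesis using kopt_delta_0_nonpos by simp
  next
    case False
    then show ?thesis using min[of "k - 1"] kopt_obj_le_succ_iff(2)[of "k - 1" v \<epsilon>] assms by simp
  qed
  moreover have "0 \<le> kopt_delta v \<epsilon> k"
  proof (cases "k + 1 = v")
    case True
    then show ?thesis using kopt_delta_last_pos[of v \<epsilon>] assms by (simp add: True[symmetric])
  next
    case False
    then show ?thesis using min[of "k + 1"] kopt_obj_le_succ_iff(1)[of k v \<epsilon>] assms by simp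
  qed
  ultimately show "kopt_delta v \<epsilon> (k - 1) \<le> 0 \<and> 0 \<le> kopt_delta v \<epsilon> k" ..
next
  assume delta: "kopt_delta v \<epsilon> (k - 1) \<le> 0 \<and> 0 \<le> kopt_delta v \<epsilon> k"
  have "kopt_obj v \<epsilon> k \<le> kopt_obj v \<epsilon> j" if "1 \<le> j" "j < v" for j
  proof (cases "k \<le> j")
    case True
    then show ?thesis using \<open>j < v\<close>
    proof (induction j rule: dec_induct)
      case (step i)
      then have "0 \<le> kopt_delta v \<epsilon> i" using delta kopt_delta_le_iff[of k v i \<epsilon>] by auto
      then show ?case using step kopt_obj_le_succ_iff(1)[of i v \<epsilon>] assms by simp
    qed simp
  next
    case False
    then have "j \<le> k" by simp
    then show ?thesis
    proof (induction j rule: inc_induct)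
      case (step i)
      then have "kopt_delta v \<epsilon> i \<le> kopt_delta v \<epsilon> (k - 1)"
        using kopt_delta_le_iff[of i v "k - 1" \<epsilon>] assms by simp
      then have "kopt_delta v \<epsilon> i \<le> 0" using delta by simp
      then show ?case using step kopt_obj_le_succ_iff(2)[of i v \<epsilon>] assms that by simp
    qed simp
  qed
  then show "k \<in> K_opt v \<epsilon>" unfolding K_opt_def using assms by auto
qed

lemma K_opt_eq:
  "K_opt v \<epsilon> = {k. 1 \<le> k \<and> k < v \<and> kopt_delta v \<epsilon> (k - 1) \<le> 0 \<and> 0 \<le> kopt_delta v \<epsilon> k}"
proof -
  have "k \<in> K_opt v \<epsilon> \<longleftrightarrow> 1 \<le> k \<and> k < v \<and> kopt_delta v \<epsilon> (k - 1) \<le> 0 \<and> 0 \<le> kopt_delta v \<epsilon> k"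
    for k
    using K_opt_iff[of k v \<epsilon>] unfolding K_opt_def by auto
  then show ?thesis by blast
qed

lemma K_opt_eq_pair:
  assumes "2 \<le> v" "1 \<le> k" "k < v" "kopt_delta v \<epsilon> k = 0"
  shows "K_opt v \<epsilon> = {k, k + 1}"
proof (intro set_eqI iffI)
  fix j assume "j \<in> K_opt v \<epsilon>"
  then have "j < v" "kopt_delta v \<epsilon> (j - 1) \<le> kopt_delta v \<epsilon> k" "kopt_delta v \<epsilon> k \<le> kopt_delta v \<epsilon> j"
    unfolding K_opt_eq using assms(4) by auto
  then have "j - 1 \<le> k" "k \<le> j"
    using kopt_delta_le_iff[of "j - 1" v k \<epsilon>] kopt_delta_le_iff[of k v j \<epsilon>] assms(3) by auto
  then show "j \<in> {k, k + 1}" by auto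
next
  fix j assume "j \<in> {k, k + 1}"
  have "k \<noteq> v - 1" using kopt_delta_last_pos[OF assms(1), of \<epsilon>] assms(4) by auto
  then have "k + 1 < v" using assms(3) by simp
  moreover have "kopt_delta v \<epsilon> (k - 1) \<le> kopt_delta v \<epsilon> k" "kopt_delta v \<epsilon> k \<le> kopt_delta v \<epsilon> (k + 1)"
    using kopt_delta_le_iff[of "k - 1" v k \<epsilon>] kopt_delta_le_iff[of k v "k + 1" \<epsilon>] \<open>k + 1 < v\<close> by simp_all
  ultimately show "j \<in> K_opt v \<epsilon>"
    unfolding K_opt_eq using assms(2,4) \<open>j \<in> {k, k + 1}\<close> by auto
qed

lemma K_opt_nonempty:
  assumes "2 \<le> v"
  shows "K_opt v \<epsilon> \<noteq> {}"
proof -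
  let ?k = "arg_min_on (kopt_obj v \<epsilon>) {1..v - 1}"
  have range: "finite {1..v - 1}" "{1..v - 1} \<noteq> {}" using assms by simp_all
  then have "?k \<in> K_opt v \<epsilon>"
    unfolding K_opt_def using arg_min_if_finite(1)[OF range] arg_min_least[OF range] by blast
  then show ?thesis by blast
qed

lemma K_opt_singleton:
  assumes "2 \<le> v" and nonzero: "\<And>k. 1 \<le> k \<Longrightarrow> k < v \<Longrightarrow> kopt_delta v \<epsilon> k \<noteq> 0"
  shows "\<exists>k. K_opt v \<epsilon> = {k}"
proof -
  have "\<not> j < k" if "j \<in> K_opt v \<epsilon>" "k \<in> K_opt v \<epsilon>" for j k
  proof
    assume "j < k"
    with that have "1 \<le> j" "k < v" "kopt_delta v \<epsilon> (k - 1) \<le> 0" "0 \<le> kopt_delta v \<epsilon> j"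
      unfolding K_opt_eq by auto
    moreover have "kopt_delta v \<epsilon> j \<le> kopt_delta v \<epsilon> (k - 1)"
      using kopt_delta_le_iff[of j v "k - 1" \<epsilon>] \<open>j < k\<close> \<open>k < v\<close> by simp
    ultimately have "kopt_delta v \<epsilon> j = 0" by simp
    then show False using nonzero \<open>1 \<le> j\<close> \<open>j < k\<close> \<open>k < v\<close> by auto
  qed
  then have "j = k" if "j \<in> K_opt v \<epsilon>" "k \<in> K_opt v \<epsilon>" for j k
    using that by (meson linorder_neqE_nat)
  moreover obtain k where "k \<in> K_opt v \<epsilon>" using K_opt_nonempty[OF assms(1)] by blast
  ultimately show ?thesis by blast
qed

lemma E_succ_eq:
  assumes "1 \<le> j"
  shows "E j (j + 1) v = ereal (sqrt ((exp \<epsilon>)\<^sup>2 - kopt_delta v \<epsilon> j / (real j * (real j + 1))))"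
proof -
  have "real j * (real j + 1) \<noteq> 0" using assms by simp
  then have "(exp \<epsilon>)\<^sup>2 - kopt_delta v \<epsilon> j / (real j * (real j + 1))
      = (real v - real j) * (real v - real (j + 1)) / (real j * real (j + 1))"
    unfolding kopt_delta_def by (simp add: field_simps)
  then show ?thesis using assms unfolding E_def by simp
qed

lemma E_succ_le_exp_iff:
  assumes "1 \<le> j"
  shows "E j (j + 1) v \<le> ereal (exp \<epsilon>) \<longleftrightarrow> 0 \<le> kopt_delta v \<epsilon> j"
    and "ereal (exp \<epsilon>) \<le> E j (j + 1) v \<longleftrightarrow> kopt_delta v \<epsilon> j \<le> 0"
    and "ereal (exp \<epsilon>) = E j (j + 1) v \<longleftrightarrow> kopt_delta v \<epsilon> j = 0"
proof -
  define t where "t = kopt_delta v \<epsilon> j / (real j * (real j + 1))"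
  have pos: "0 < real j * (real j + 1)" using assms by simp
  have "0 \<le> t \<longleftrightarrow> 0 \<le> kopt_delta v \<epsilon> j" "t \<le> 0 \<longleftrightarrow> kopt_delta v \<epsilon> j \<le> 0"
    "t = 0 \<longleftrightarrow> kopt_delta v \<epsilon> j = 0"
    unfolding t_def using pos assms by (simp_all add: pos_le_divide_eq pos_divide_le_eq)
  moreover have "sqrt ((exp \<epsilon>)\<^sup>2 - t) \<le> sqrt ((exp \<epsilon>)\<^sup>2) \<longleftrightarrow> 0 \<le> t"
    "sqrt ((exp \<epsilon>)\<^sup>2) \<le> sqrt ((exp \<epsilon>)\<^sup>2 - t) \<longleftrightarrow> t \<le> 0"
    "sqrt ((exp \<epsilon>)\<^sup>2) = sqrt ((exp \<epsilon>)\<^sup>2 - t) \<longleftrightarrow> t = 0"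
    by (simp_all only: real_sqrt_le_iff real_sqrt_eq_iff) auto
  ultimately show "E j (j + 1) v \<le> ereal (exp \<epsilon>) \<longleftrightarrow> 0 \<le> kopt_delta v \<epsilon> j"
    and "ereal (exp \<epsilon>) \<le> E j (j + 1) v \<longleftrightarrow> kopt_delta v \<epsilon> j \<le> 0"
    and "ereal (exp \<epsilon>) = E j (j + 1) v \<longleftrightarrow> kopt_delta v \<epsilon> j = 0"
    unfolding E_succ_eq[OF assms, where \<epsilon> = \<epsilon>] t_def by simp_all
qed

lemma exp_le_E_pred_iff:
  assumes "1 \<le> k"
  shows "ereal (exp \<epsilon>) \<le> E (k - 1) k v \<longleftrightarrow> kopt_delta v \<epsilon> (k - 1) \<le> 0"
proof (cases "k = 1")
  case True
  then show ?thesis using kopt_delta_0_nonpos by (simp add: E_def)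
next
  case False
  then show ?thesis using E_succ_le_exp_iff(2)[of "k - 1" \<epsilon> v] assms by simp
qed

theorem proposition2:
  fixes v :: nat and \<epsilon> :: real
  assumes "v \<ge> 2" and "\<epsilon> > 0"
  shows "(\<forall>k \<in> {1..v-1}. k \<in> K_opt v \<epsilon> \<longleftrightarrow>
            (E k (k+1) v \<le> ereal (exp \<epsilon>) \<and> ereal (exp \<epsilon>) \<le> E (k-1) k v))
       \<and> (\<forall>k \<in> {1..v-1}. ereal (exp \<epsilon>) = E k (k+1) v \<longrightarrow> K_opt v \<epsilon> = {k, k+1})
       \<and> (\<not> (\<exists>k \<in> {1..v-1}. ereal (exp \<epsilon>) = E k (k+1) v) \<longrightarrow> (\<exists>k. K_opt v \<epsilon> = {k}))"
proof (intro conjI ballI impI)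
  fix k assume "k \<in> {1..v-1}"
  then have k: "1 \<le> k" "k < v" using assms(1) by auto
  then show "k \<in> K_opt v \<epsilon> \<longleftrightarrow> (E k (k+1) v \<le> ereal (exp \<epsilon>) \<and> ereal (exp \<epsilon>) \<le> E (k-1) k v)"
    using K_opt_iff E_succ_le_exp_iff(1) exp_le_E_pred_iff by (simp add: conj_commute)
  assume "ereal (exp \<epsilon>) = E k (k+1) v"
  then show "K_opt v \<epsilon> = {k, k+1}"
    using K_opt_eq_pair[OF assms(1) k] E_succ_le_exp_iff(3)[OF k(1)] by simp
next
  assume no_tie: "\<not> (\<exists>k \<in> {1..v-1}. ereal (exp \<epsilon>) = E k (k+1) v)"
  show "\<exists>k. K_opt v \<epsilon> = {k}"
  proof (rule K_opt_singleton[OF assms(1)])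
    fix k assume "1 \<le> k" "k < v"
    then show "kopt_delta v \<epsilon> k \<noteq> 0" using no_tie E_succ_le_exp_iff(3) by force
  qed
qed

end
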